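(* Let $N>0$ and $\tau\in(0,1)$. There exists a constant $C=C(\tau,N)>0$, depending only on $\tau$ and $N$, such that every radial solution $(v_1,v_2)$ of $(P)_\tau$ (as described in the context) satisfies $$v_1(r)+2(N+1)\log r\le C\quad\text{and}\quad v_2(r)+2\log r\le C\qquad\text{for all } r>0.$$
   Context: A radial solution of $(P)_\tau$ is a pair $v_1,v_2\in C([0,\infty))\cap C^2((0,\infty))$ with, for $r>0$, $$-(rv_1')'=r^{2N+1}e^{v_1}-\tau re^{v_2},\qquad -(rv_2')'=re^{v_2}-\tau r^{2N+1}e^{v_1},$$ $v_1'(0)=v_2'(0)=0$, $$\beta_1=\int_0^\infty r^{2N+1}e^{v_1}\,dr<\infty,\qquad \beta_2=\int_0^\infty re^{v_2}\,dr<\infty,$$ and $\lim_{r\to\infty}rv_1'(r)=-(\beta_1-\tau\beta_2)$, $\lim_{r\to\infty}rv_2'(r)=-(\beta_2-\tau\beta_1)$. *)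

theory Defs
  imports "HOL-Analysis.Analysis"
begin

definition beta1 :: "real \<Rightarrow> (real \<Rightarrow> real) \<Rightarrow> real" where
  "beta1 N v1 = integral {0..} (\<lambda>r. r powr (2*N+1) * exp (v1 r))"

definition beta2 :: "(real \<Rightarrow> real) \<Rightarrow> real" where
  "beta2 v2 = integral {0..} (\<lambda>r. r * exp (v2 r))"

definition C2_pos :: "(real \<Rightarrow> real) \<Rightarrow> bool" where
  "C2_pos v \<longleftrightarrow>
     (\<forall>r>0. v differentiable (at r) \<and> deriv v differentiable (at r)) \<and>
     continuous_on {0<..} (deriv (deriv v))"

definition radial_solution ::
  "real \<Rightarrow> real \<Rightarrow> (real \<Rightarrow> real) \<Rightarrow> (real \<Rightarrow> real) \<Rightarrow> bool" where
  "radial_solution N \<tau> v1 v2 \<longleftrightarrow>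
     continuous_on {0..} v1 \<and> continuous_on {0..} v2 \<and>
     C2_pos v1 \<and> C2_pos v2 \<and>
     (\<forall>r>0. - deriv (\<lambda>s. s * deriv v1 s) r
              = r powr (2*N+1) * exp (v1 r) - \<tau> * r * exp (v2 r)) \<and>
     (\<forall>r>0. - deriv (\<lambda>s. s * deriv v2 s) r
              = r * exp (v2 r) - \<tau> * r powr (2*N+1) * exp (v1 r)) \<and>
     (v1 has_real_derivative 0) (at 0 within {0..}) \<and>
     (v2 has_real_derivative 0) (at 0 within {0..}) \<and>
     (\<lambda>r. r powr (2*N+1) * exp (v1 r)) integrable_on {0..} \<and>
     (\<lambda>r. r * exp (v2 r)) integrable_on {0..} \<and>
     ((\<lambda>r. r * deriv v1 r) \<longlongrightarrow> - (beta1 N v1 - \<tau> * beta2 v2)) at_top \<and>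
     ((\<lambda>r. r * deriv v2 r) \<longlongrightarrow> - (beta2 v2 - \<tau> * beta1 N v1)) at_top"

end

theory Submission
  imports Defs
begin

text \<open>Along a radial solution put \<open>X = r v\<^sub>1' + 2N+2\<close> and \<open>Y = r v\<^sub>2' + 2\<close>. The system makes
  \<open>(X\<^sup>2 + 2\<tau>XY + Y\<^sup>2) / (2(1-\<tau>\<^sup>2)) + r\<^bsup>2N+2\<^esup> e\<^bsup>v\<^sub>1\<^esup> + r\<^sup>2 e\<^bsup>v\<^sub>2\<^esup>\<close> a first integral
  (a Pohozaev identity). Since \<open>r v\<^sub>i'(r) \<rightarrow> 0\<close> as \<open>r \<rightarrow> 0\<close>, its value is
  \<open>((2N+2)\<^sup>2 + 4\<tau>(2N+2) + 4) / (2(1-\<tau>\<^sup>2))\<close>, the same for every solution. For \<open>|\<tau>| < 1\<close> the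
  quadratic part is nonnegative, so both \<open>r\<^bsup>2N+2\<^esup> e\<^bsup>v\<^sub>1\<^esup>\<close> and \<open>r\<^sup>2 e\<^bsup>v\<^sub>2\<^esup>\<close> are bounded
  by this constant; taking logarithms gives the estimate.\<close>

lemma continuous_on_atLeast_at_right:
  fixes f :: "real \<Rightarrow> real"
  assumes "continuous_on {a..} f"
  shows "(f \<longlongrightarrow> f a) (at_right a)"
  using continuous_on_Icc_at_rightD[OF continuous_on_subset[OF assms, of "{a..a+1}"]] by auto

lemma continuous_on_atLeast_bounded:
  fixes f :: "real \<Rightarrow> real"
  assumes "continuous_on {a..} f"
  obtains B where "\<And>x. a \<le> x \<Longrightarrow> x \<le> b \<Longrightarrow> \<bar>f x\<bar> \<le> B"
proof -
  have "compact (f ` {a..b})"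
    by (rule compact_continuous_image[OF continuous_on_subset[OF assms]]) auto
  then obtain B where "\<forall>y\<in>f ` {a..b}. \<bar>y\<bar> \<le> B"
    by (meson compact_imp_bounded bounded_real)
  then show ?thesis by (intro that[of B]) auto
qed

text \<open>Two mean value steps: on \<open>[r/2, r]\<close> the quantity \<open>z v'(z)\<close> is controlled by the
  oscillation of \<open>v\<close>, and from \<open>z\<close> to \<open>r\<close> the flux \<open>s v'(s)\<close> moves by at most \<open>M r\<close>.\<close>
lemma times_deriv_tendsto_zero_at_right:
  fixes v g :: "real \<Rightarrow> real"
  assumes cont: "continuous_on {0..} v"
    and dv: "\<And>r. r > 0 \<Longrightarrow> (v has_real_derivative deriv v r) (at r)"
    and dflux: "\<And>r. r > 0 \<Longrightarrow> ((\<lambda>s. s * deriv v s) has_real_derivative g r) (at r)"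
    and g_bound: "\<And>r. 0 < r \<Longrightarrow> r \<le> 1 \<Longrightarrow> \<bar>g r\<bar> \<le> M"
  shows "((\<lambda>r. r * deriv v r) \<longlongrightarrow> 0) (at_right 0)"
proof (rule Lim_null_comparison)
  let ?G = "\<lambda>r. 2 * \<bar>v r - v (r/2)\<bar> + M * r"
  have "((\<lambda>r. v (r/2)) \<longlongrightarrow> v 0) (at_right 0)"
    using continuous_on_atLeast_at_right[OF cont]
    by (rule filterlim_compose) (auto intro!: filterlim_at_withinI tendsto_eq_intros
        simp: eventually_at_filter)
  then have "(?G \<longlongrightarrow> 2 * \<bar>v 0 - v 0\<bar> + M * 0) (at_right 0)"
    by (intro tendsto_intros continuous_on_atLeast_at_right[OF cont]) auto
  then show "(?G \<longlongrightarrow> 0) (at_right 0)" by simp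
  have "\<forall>\<^sub>F r in at_right 0. 0 < r \<and> r \<le> (1::real)"
    by (simp add: eventually_at_right_field) (rule exI[of _ 1], auto)
  then show "\<forall>\<^sub>F r in at_right 0. norm (r * deriv v r) \<le> ?G r"
  proof (rule eventually_mono)
    fix r :: real assume r: "0 < r \<and> r \<le> 1"
    obtain z where z: "r/2 < z" "z < r" "v r - v (r/2) = (r - r/2) * deriv v z"
      using MVT2[of "r/2" r v "deriv v"] r dv by auto
    have "\<bar>z * deriv v z\<bar> \<le> r * \<bar>deriv v z\<bar>"
      using z r by (auto simp: abs_mult intro: mult_right_mono)
    also have "\<dots> = 2 * \<bar>v r - v (r/2)\<bar>"
    proof -
      have "r * deriv v z = 2 * (v r - v (r/2))" using z(3) by (simp add: field_simps)
      then show ?thesis using r by (metis abs_mult abs_of_pos zero_less_numeral)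
    qed
    finally have osc: "\<bar>z * deriv v z\<bar> \<le> 2 * \<bar>v r - v (r/2)\<bar>" .
    obtain w where w: "z < w" "w < r" "r * deriv v r - z * deriv v z = (r - z) * g w"
      using MVT2[of z r "\<lambda>s. s * deriv v s" g] z r dflux by auto
    have "\<bar>g w\<bar> \<le> M" using g_bound[of w] w z r by auto
    then have "\<bar>(r - z) * g w\<bar> \<le> (r - z) * M"
      using z by (simp add: abs_mult mult_left_mono)
    also have "\<dots> \<le> M * r"
      using z r \<open>\<bar>g w\<bar> \<le> M\<close> by (simp add: mult.commute mult_left_mono)
    finally have "\<bar>(r - z) * g w\<bar> \<le> M * r" .
    with osc w(3) show "norm (r * deriv v r) \<le> ?G r" by simp
  qed
qed

lemma has_real_derivative_of_C2_pos:
  assumes "C2_pos v" "r > 0"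
  shows "(v has_real_derivative deriv v r) (at r)"
  using assms unfolding C2_pos_def DERIV_deriv_iff_real_differentiable by blast

lemma has_real_derivative_times_deriv_of_C2_pos:
  assumes "C2_pos v" "r > 0"
  shows "((\<lambda>s. s * deriv v s) has_real_derivative deriv (\<lambda>s. s * deriv v s) r) (at r)"
proof -
  have "deriv v differentiable (at r)" using assms unfolding C2_pos_def by blast
  then have "(\<lambda>s. s * deriv v s) differentiable (at r)"
    by (intro differentiable_mult differentiable_ident)
  then show ?thesis by (simp add: DERIV_deriv_iff_real_differentiable)
qed

lemma has_real_derivative_powr_exp:
  fixes v :: "real \<Rightarrow> real"
  assumes r: "r > 0" and dv: "(v has_real_derivative d) (at r)"
  shows "((\<lambda>s. s powr k * exp (v s)) has_real_derivative
           r powr (k - 1) * exp (v r) * (r * d + k)) (at r)"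
  using r dv by (auto intro!: derivative_eq_intros simp: powr_diff field_simps)

lemma powr_exp_le_exp:
  fixes r p a B :: real
  assumes "0 < r" "r \<le> 1" "0 \<le> p" "a \<le> B"
  shows "r powr p * exp a \<le> exp B"
  using mult_mono[OF powr_le1[of p r] exp_mono[OF assms(4)]] assms by auto

lemma quadratic_energy_has_derivative_zero:
  fixes X Y P Q :: "real \<Rightarrow> real"
  assumes "\<tau>^2 \<noteq> 1"
    and "(X has_real_derivative -(f - \<tau> * g)) (at r)"
    and "(Y has_real_derivative -(g - \<tau> * f)) (at r)"
    and "(P has_real_derivative f * X r) (at r)"
    and "(Q has_real_derivative g * Y r) (at r)"
  shows "((\<lambda>s. (X s ^ 2 + 2 * \<tau> * X s * Y s + Y s ^ 2) / (2 * (1 - \<tau>^2)) + P s + Q s)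
           has_real_derivative 0) (at r)"
proof -
  have "1 - \<tau>^2 \<noteq> 0" using assms(1) by simp
  then show ?thesis
    using assms(2-) by (auto intro!: derivative_eq_intros simp: field_simps power2_eq_square)
qed

lemma quadratic_form_nonneg:
  fixes \<tau> x y :: real
  assumes "\<bar>\<tau>\<bar> \<le> 1"
  shows "0 \<le> x ^ 2 + 2 * \<tau> * x * y + y ^ 2"
proof -
  have "\<tau>^2 \<le> 1" using assms by (simp add: abs_square_le_1)
  then have "0 \<le> (x + \<tau> * y)^2 + (1 - \<tau>^2) * y^2" by simp
  also have "\<dots> = x ^ 2 + 2 * \<tau> * x * y + y ^ 2" by (simp add: algebra_simps power2_eq_square)
  finally show ?thesis .
qed

lemma radial_solution_flux_derivatives:
  assumes sol: "radial_solution N \<tau> v1 v2" and r: "r > 0"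
  shows "((\<lambda>s. s * deriv v1 s) has_real_derivative
           -(r powr (2*N+1) * exp (v1 r) - \<tau> * r * exp (v2 r))) (at r)"
    and "((\<lambda>s. s * deriv v2 s) has_real_derivative
           -(r * exp (v2 r) - \<tau> * r powr (2*N+1) * exp (v1 r))) (at r)"
proof -
  have C2: "C2_pos v1" "C2_pos v2"
    and ode: "- deriv (\<lambda>s. s * deriv v1 s) r = r powr (2*N+1) * exp (v1 r) - \<tau> * r * exp (v2 r)"
      "- deriv (\<lambda>s. s * deriv v2 s) r = r * exp (v2 r) - \<tau> * r powr (2*N+1) * exp (v1 r)"
    using sol r unfolding radial_solution_def by auto
  show "((\<lambda>s. s * deriv v1 s) has_real_derivative
           -(r powr (2*N+1) * exp (v1 r) - \<tau> * r * exp (v2 r))) (at r)"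
    using has_real_derivative_times_deriv_of_C2_pos[OF C2(1) r] ode(1) by (metis minus_minus)
  show "((\<lambda>s. s * deriv v2 s) has_real_derivative
           -(r * exp (v2 r) - \<tau> * r powr (2*N+1) * exp (v1 r))) (at r)"
    using has_real_derivative_times_deriv_of_C2_pos[OF C2(2) r] ode(2) by (metis minus_minus)
qed

definition pohozaev_energy ::
  "real \<Rightarrow> real \<Rightarrow> (real \<Rightarrow> real) \<Rightarrow> (real \<Rightarrow> real) \<Rightarrow> real \<Rightarrow> real" where
  "pohozaev_energy N \<tau> v1 v2 s =
     ((s * deriv v1 s + (2*N+2)) ^ 2 + 2 * \<tau> * (s * deriv v1 s + (2*N+2)) * (s * deriv v2 s + 2)
        + (s * deriv v2 s + 2) ^ 2) / (2 * (1 - \<tau>^2))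
     + s powr (2*N+2) * exp (v1 s) + s powr 2 * exp (v2 s)"

definition pohozaev_level :: "real \<Rightarrow> real \<Rightarrow> real" where
  "pohozaev_level N \<tau> = ((2*N+2)^2 + 2 * \<tau> * (2*N+2) * 2 + 2^2) / (2 * (1 - \<tau>^2))"

lemma pohozaev_energy_has_derivative_zero:
  assumes sol: "radial_solution N \<tau> v1 v2" and "\<tau>^2 \<noteq> 1" and r: "r > 0"
  shows "(pohozaev_energy N \<tau> v1 v2 has_real_derivative 0) (at r)"
proof -
  have dv1: "(v1 has_real_derivative deriv v1 r) (at r)"
    and dv2: "(v2 has_real_derivative deriv v2 r) (at r)"
    using sol r has_real_derivative_of_C2_pos unfolding radial_solution_def by blast+
  have "((\<lambda>s. s powr (2*N+2) * exp (v1 s)) has_real_derivative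
          r powr (2*N+1) * exp (v1 r) * (r * deriv v1 r + (2*N+2))) (at r)"
    using has_real_derivative_powr_exp[OF r dv1, of "2*N+2"] by (simp add: add_ac)
  moreover have "((\<lambda>s. s powr 2 * exp (v2 s)) has_real_derivative
          r * exp (v2 r) * (r * deriv v2 r + 2)) (at r)"
    using has_real_derivative_powr_exp[OF r dv2, of 2] r by simp
  moreover have "((\<lambda>s. s * deriv v1 s + (2*N+2)) has_real_derivative
          -(r powr (2*N+1) * exp (v1 r) - \<tau> * (r * exp (v2 r)))) (at r)"
    using DERIV_add[OF radial_solution_flux_derivatives(1)[OF sol r] DERIV_const]
    by (simp add: mult.assoc)
  moreover have "((\<lambda>s. s * deriv v2 s + 2) has_real_derivative
          -(r * exp (v2 r) - \<tau> * (r powr (2*N+1) * exp (v1 r)))) (at r)"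
    using DERIV_add[OF radial_solution_flux_derivatives(2)[OF sol r] DERIV_const]
    by (simp add: mult.assoc)
  ultimately show ?thesis
    unfolding pohozaev_energy_def[abs_def]
    by (intro quadratic_energy_has_derivative_zero assms(2))
qed

lemma radial_solution_flux_tendsto_zero:
  assumes sol: "radial_solution N \<tau> v1 v2" and N: "0 \<le> 2*N+1"
  shows "((\<lambda>r. r * deriv v1 r) \<longlongrightarrow> 0) (at_right 0)"
    and "((\<lambda>r. r * deriv v2 r) \<longlongrightarrow> 0) (at_right 0)"
proof -
  have c1: "continuous_on {0..} v1" and c2: "continuous_on {0..} v2"
    and "C2_pos v1" "C2_pos v2"
    using sol unfolding radial_solution_def by auto
  then have dv1: "\<And>r. r > 0 \<Longrightarrow> (v1 has_real_derivative deriv v1 r) (at r)"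
    and dv2: "\<And>r. r > 0 \<Longrightarrow> (v2 has_real_derivative deriv v2 r) (at r)"
    using has_real_derivative_of_C2_pos by blast+
  obtain B1 where B1: "\<And>x. 0 \<le> x \<Longrightarrow> x \<le> 1 \<Longrightarrow> \<bar>v1 x\<bar> \<le> B1"
    using continuous_on_atLeast_bounded[OF c1] by blast
  obtain B2 where B2: "\<And>x. 0 \<le> x \<Longrightarrow> x \<le> 1 \<Longrightarrow> \<bar>v2 x\<bar> \<le> B2"
    using continuous_on_atLeast_bounded[OF c2] by blast
  define M where "M = exp B1 + exp B2 + \<bar>\<tau>\<bar> * exp B1 + \<bar>\<tau>\<bar> * exp B2"
  have rhs_bound:
    "\<bar>-(r powr (2*N+1) * exp (v1 r) - \<tau> * r * exp (v2 r))\<bar> \<le> M"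
    "\<bar>-(r * exp (v2 r) - \<tau> * r powr (2*N+1) * exp (v1 r))\<bar> \<le> M"
    if r: "0 < r" "r \<le> 1" for r
  proof -
    have f: "0 \<le> r powr (2*N+1) * exp (v1 r)" "r powr (2*N+1) * exp (v1 r) \<le> exp B1"
      using r N B1[of r] powr_exp_le_exp[of r "2*N+1" "v1 r" B1] by auto
    have g: "0 \<le> r * exp (v2 r)" "r * exp (v2 r) \<le> exp B2"
      using r B2[of r] powr_exp_le_exp[of r 1 "v2 r" B2] by auto
    have "\<bar>\<tau> * r * exp (v2 r)\<bar> \<le> \<bar>\<tau>\<bar> * exp B2"
      "\<bar>\<tau> * r powr (2*N+1) * exp (v1 r)\<bar> \<le> \<bar>\<tau>\<bar> * exp B1"
      using f g by (auto simp: abs_mult mult.assoc intro: mult_left_mono)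
    moreover have "0 \<le> \<bar>\<tau>\<bar> * exp B1" "0 \<le> \<bar>\<tau>\<bar> * exp B2" by auto
    ultimately show "\<bar>-(r powr (2*N+1) * exp (v1 r) - \<tau> * r * exp (v2 r))\<bar> \<le> M"
      "\<bar>-(r * exp (v2 r) - \<tau> * r powr (2*N+1) * exp (v1 r))\<bar> \<le> M"
      using f g unfolding M_def abs_le_iff by linarith+
  qed
  show "((\<lambda>r. r * deriv v1 r) \<longlongrightarrow> 0) (at_right 0)"
    using times_deriv_tendsto_zero_at_right[OF c1 dv1
        radial_solution_flux_derivatives(1)[OF sol] rhs_bound(1)] by blast
  show "((\<lambda>r. r * deriv v2 r) \<longlongrightarrow> 0) (at_right 0)"
    using times_deriv_tendsto_zero_at_right[OF c2 dv2
        radial_solution_flux_derivatives(2)[OF sol] rhs_bound(2)] by blast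
qed

lemma pohozaev_energy_tendsto_at_right_0:
  assumes sol: "radial_solution N \<tau> v1 v2" and N: "0 \<le> 2*N+1" and "\<tau>^2 \<noteq> 1"
  shows "(pohozaev_energy N \<tau> v1 v2 \<longlongrightarrow> pohozaev_level N \<tau>) (at_right 0)"
proof -
  have "(v1 \<longlongrightarrow> v1 0) (at_right 0)" "(v2 \<longlongrightarrow> v2 0) (at_right 0)"
    using sol continuous_on_atLeast_at_right unfolding radial_solution_def by blast+
  moreover have "((\<lambda>s. s powr p) \<longlongrightarrow> 0) (at_right (0::real))" if "p > 0" for p
    using that eventually_at_right_less[of 0]
    by (intro tendsto_zero_powrI tendsto_ident_at) (auto elim: eventually_mono)
  ultimately have "(pohozaev_energy N \<tau> v1 v2 \<longlongrightarrow>
      ((0 + (2*N+2))^2 + 2 * \<tau> * (0 + (2*N+2)) * (0 + 2) + (0 + 2)^2) / (2 * (1 - \<tau>^2))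
      + 0 * exp (v1 0) + 0 * exp (v2 0)) (at_right 0)"
    unfolding pohozaev_energy_def[abs_def] using assms(2,3)
    by (intro tendsto_intros radial_solution_flux_tendsto_zero[OF sol N]) auto
  then show ?thesis by (simp add: pohozaev_level_def)
qed

lemma pohozaev_energy_eq:
  assumes sol: "radial_solution N \<tau> v1 v2" and N: "0 \<le> 2*N+1" and "\<tau>^2 \<noteq> 1" and r: "r > 0"
  shows "pohozaev_energy N \<tau> v1 v2 r = pohozaev_level N \<tau>"
proof -
  obtain c where c: "\<forall>s\<in>{0<..}. pohozaev_energy N \<tau> v1 v2 s = c"
    using has_field_derivative_zero_constant[of "{0<..}" "pohozaev_energy N \<tau> v1 v2"]
      pohozaev_energy_has_derivative_zero[OF sol assms(3)]
    by (auto intro: has_field_derivative_at_within)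
  have ev: "\<forall>\<^sub>F s in at_right 0. pohozaev_energy N \<tau> v1 v2 s = c"
    using eventually_at_right_less[of 0] by (rule eventually_mono) (use c in auto)
  have "((\<lambda>_. c) \<longlongrightarrow> pohozaev_level N \<tau>) (at_right (0::real))"
    using Lim_transform_eventually[OF pohozaev_energy_tendsto_at_right_0[OF sol N assms(3)] ev] .
  then show ?thesis
    using c r tendsto_unique[OF trivial_limit_at_right_real _ tendsto_const] by auto
qed

lemma radial_solution_le_pohozaev_level:
  assumes sol: "radial_solution N \<tau> v1 v2" and N: "0 \<le> 2*N+1" and \<tau>: "\<bar>\<tau>\<bar> < 1"
    and r: "r > 0"
  shows "v1 r + 2*(N+1) * ln r \<le> ln (pohozaev_level N \<tau>)"
    and "v2 r + 2 * ln r \<le> ln (pohozaev_level N \<tau>)"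
proof -
  let ?X = "r * deriv v1 r + (2*N+2)" and ?Y = "r * deriv v2 r + 2"
  have "\<tau>^2 < 1" using \<tau> by (simp add: abs_square_less_1)
  then have "0 \<le> (?X^2 + 2 * \<tau> * ?X * ?Y + ?Y^2) / (2 * (1 - \<tau>^2))"
    using quadratic_form_nonneg[of \<tau>] \<tau> by simp
  moreover have "pohozaev_energy N \<tau> v1 v2 r = pohozaev_level N \<tau>"
    using pohozaev_energy_eq[OF sol N _ r] \<open>\<tau>^2 < 1\<close> by simp
  moreover have "0 < r powr (2*N+2) * exp (v1 r)" "0 < r powr 2 * exp (v2 r)"
    using r by simp_all
  ultimately have "r powr (2*N+2) * exp (v1 r) \<le> pohozaev_level N \<tau>"
    "r powr 2 * exp (v2 r) \<le> pohozaev_level N \<tau>"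
    unfolding pohozaev_energy_def by linarith+
  with \<open>0 < r powr (2*N+2) * exp (v1 r)\<close> \<open>0 < r powr 2 * exp (v2 r)\<close>
  have "ln (r powr (2*N+2) * exp (v1 r)) \<le> ln (pohozaev_level N \<tau>)"
    "ln (r powr 2 * exp (v2 r)) \<le> ln (pohozaev_level N \<tau>)"
    by simp_all
  moreover have "ln (r powr (2*N+2) * exp (v1 r)) = v1 r + 2*(N+1) * ln r"
    "ln (r powr 2 * exp (v2 r)) = v2 r + 2 * ln r"
    using r by (simp_all add: ln_mult ln_realpow algebra_simps)
  ultimately show "v1 r + 2*(N+1) * ln r \<le> ln (pohozaev_level N \<tau>)"
    "v2 r + 2 * ln r \<le> ln (pohozaev_level N \<tau>)"
    by simp_all
qed

theorem mainTheorem10: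
  fixes N \<tau> :: real
  assumes "N > 0" and "0 < \<tau>" and "\<tau> < 1"
  shows "\<exists>C>0. \<forall>v1 v2. radial_solution N \<tau> v1 v2 \<longrightarrow>
           (\<forall>r>0. v1 r + 2*(N+1) * ln r \<le> C \<and> v2 r + 2 * ln r \<le> C)"
proof (intro exI[of _ "\<bar>ln (pohozaev_level N \<tau>)\<bar> + 1"] conjI allI impI)
  fix v1 v2 and r :: real
  assume "radial_solution N \<tau> v1 v2" "r > 0"
  then show "v1 r + 2*(N+1) * ln r \<le> \<bar>ln (pohozaev_level N \<tau>)\<bar> + 1"
    "v2 r + 2 * ln r \<le> \<bar>ln (pohozaev_level N \<tau>)\<bar> + 1"
    using radial_solution_le_pohozaev_level[of N \<tau> v1 v2 r] assms by auto
qed simp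

end
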